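(* Let $\mathbf A$ be a Mal'cev algebra, $n\ge1$, and $\alpha_0,\dots,\alpha_{n-1}$ congruences of $\mathbf A$. Then $\psi_i(\Delta(\alpha_0,\dots,\alpha_{n-1}))=\psi_j(\Delta(\alpha_0,\dots,\alpha_{n-1}))$ for all $i,j<2^n$.
   Context: A Mal'cev algebra is an algebra with a ternary term operation $q$ satisfying $q(x,x,y)=y=q(y,x,x)$. Tuples in $A^m$ are indexed by $0,\dots,m-1$; $k_{(i)}$ is the $i$-th binary digit of $k$ (least significant is $i=0$). For $a,b\in A$ and $i<n$, $\mathbf c_i^n(a,b)\in A^{2^n}$ has $k$-th coordinate $a$ if $k_{(i)}=0$ and $b$ if $k_{(i)}=1$. $\Delta(\alpha_0,\dots,\alpha_{n-1})$ is the subuniverse of $\mathbf A^{2^n}$ generated by $\{\mathbf c_i^n(a,b): i<n,\ (a,b)\in\alpha_i\}$. Forks: for $R\subseteq A^m$ and $i<m$, $\psi_i(R)$ is the set of pairs $(a,b)$ for which there exist $\mathbf c,\mathbf d\in R$ with $c_i=a$, $d_i=b$, and $c_k=d_k$ for all $k\neq i$. *)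

theory Defs
  imports Main
begin

definition is_algebra :: "'a set \<Rightarrow> (nat \<times> ('a list \<Rightarrow> 'a)) set \<Rightarrow> bool" where
  "is_algebra A F \<longleftrightarrow> A \<noteq> {} \<and>
     (\<forall>(k, f) \<in> F. \<forall>xs. length xs = k \<and> set xs \<subseteq> A \<longrightarrow> f xs \<in> A)"

inductive term_op :: "'a set \<Rightarrow> (nat \<times> ('a list \<Rightarrow> 'a)) set \<Rightarrow> nat \<Rightarrow> ('a list \<Rightarrow> 'a) \<Rightarrow> bool"
  for A F m where
  proj: "i < m \<Longrightarrow> term_op A F m (\<lambda>xs. xs ! i)"
| comp: "(k, g) \<in> F \<Longrightarrow> length hs = k \<Longrightarrow> (\<forall>h \<in> set hs. term_op A F m h)
          \<Longrightarrow> term_op A F m (\<lambda>xs. g (map (\<lambda>h. h xs) hs))"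

definition malcev_algebra :: "'a set \<Rightarrow> (nat \<times> ('a list \<Rightarrow> 'a)) set \<Rightarrow> bool" where
  "malcev_algebra A F \<longleftrightarrow> is_algebra A F \<and>
     (\<exists>q. term_op A F 3 q \<and> (\<forall>x\<in>A. \<forall>y\<in>A. q [x, x, y] = y \<and> q [y, x, x] = y))"

definition congruence :: "'a set \<Rightarrow> (nat \<times> ('a list \<Rightarrow> 'a)) set \<Rightarrow> 'a rel \<Rightarrow> bool" where
  "congruence A F \<alpha> \<longleftrightarrow> equiv A \<alpha> \<and>
     (\<forall>(k, f) \<in> F. \<forall>xs ys. length xs = k \<and> length ys = k \<and>
        (\<forall>j<k. (xs ! j, ys ! j) \<in> \<alpha>) \<longrightarrow> (f xs, f ys) \<in> \<alpha>)"

text \<open>Tuples in A^m are lists of length m, indexed 0..m-1.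
  The subuniverse of A^m generated by G (basic operations act coordinatewise).\<close>
inductive_set gen_sub :: "(nat \<times> ('a list \<Rightarrow> 'a)) set \<Rightarrow> nat \<Rightarrow> 'a list set \<Rightarrow> 'a list set"
  for F m G where
  base: "x \<in> G \<Longrightarrow> x \<in> gen_sub F m G"
| op: "(k, f) \<in> F \<Longrightarrow> length xs = k \<Longrightarrow> (\<forall>x \<in> set xs. x \<in> gen_sub F m G)
        \<Longrightarrow> map (\<lambda>j. f (map (\<lambda>x. x ! j) xs)) [0..<m] \<in> gen_sub F m G"

definition bit_digit :: "nat \<Rightarrow> nat \<Rightarrow> nat" where
  "bit_digit k i = (k div 2 ^ i) mod 2"

definition cvec :: "nat \<Rightarrow> nat \<Rightarrow> 'a \<Rightarrow> 'a \<Rightarrow> 'a list" where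
  "cvec n i a b = map (\<lambda>k. if bit_digit k i = 0 then a else b) [0..<2 ^ n]"

definition Delta :: "(nat \<times> ('a list \<Rightarrow> 'a)) set \<Rightarrow> nat \<Rightarrow> (nat \<Rightarrow> 'a rel) \<Rightarrow> 'a list set" where
  "Delta F n \<alpha> = gen_sub F (2 ^ n) {cvec n i a b | i a b. i < n \<and> (a, b) \<in> \<alpha> i}"

definition fork :: "nat \<Rightarrow> nat \<Rightarrow> 'a list set \<Rightarrow> 'a rel" where
  "fork m i R = {(a, b). \<exists>c\<in>R. \<exists>d\<in>R. c ! i = a \<and> d ! i = b \<and>
                         (\<forall>k<m. k \<noteq> i \<longrightarrow> c ! k = d ! k)}"

end

theory Submission
  imports Defs
begin

text \<open>For every t < 2^n the map k \<mapsto> k xor t permutes the coordinates of the cube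
  A^(2^n); it sends c_i(a,b) to c_i(a,b) or c_i(b,a). Since congruences are symmetric,
  Delta(\<alpha>_0, ..., \<alpha>_(n-1)) is invariant under this permutation, and choosing
  t = i xor j carries the fork at coordinate i onto the fork at coordinate j.\<close>

definition reindex :: "nat \<Rightarrow> (nat \<Rightarrow> nat) \<Rightarrow> 'a list \<Rightarrow> 'a list" where
  "reindex m \<sigma> c = map (\<lambda>k. c ! \<sigma> k) [0..<m]"

lemma nth_reindex: "k < m \<Longrightarrow> reindex m \<sigma> c ! k = c ! \<sigma> k"
  by (simp add: reindex_def)

lemma gen_sub_reindex:
  assumes maps: "\<forall>k<m. \<sigma> k < m"
    and gens: "\<And>x. x \<in> G \<Longrightarrow> reindex m \<sigma> x \<in> gen_sub F m G"
    and x: "x \<in> gen_sub F m G"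
  shows "reindex m \<sigma> x \<in> gen_sub F m G"
  using x
proof (induction rule: gen_sub.induct)
  case (base x)
  then show ?case by (rule gens)
next
  case (op k f xs)
  have "reindex m \<sigma> (map (\<lambda>j. f (map (\<lambda>x. x ! j) xs)) [0..<m])
      = map (\<lambda>j. f (map (\<lambda>x. x ! j) (map (reindex m \<sigma>) xs))) [0..<m]"
    by (rule nth_equalityI) (auto simp: reindex_def maps comp_def)
  also have "\<dots> \<in> gen_sub F m G"
    by (rule gen_sub.op) (use op in auto)
  finally show ?case .
qed

lemma fork_subset_fork_reindex:
  assumes inj: "inj_on \<sigma> {0..<m}" and maps: "\<forall>k<m. \<sigma> k < m"
    and closed: "\<And>c. c \<in> R \<Longrightarrow> reindex m \<sigma> c \<in> R"
    and j: "j < m"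
  shows "fork m (\<sigma> j) R \<subseteq> fork m j R"
proof
  fix p assume "p \<in> fork m (\<sigma> j) R"
  then obtain c d where cd: "c \<in> R" "d \<in> R" "p = (c ! \<sigma> j, d ! \<sigma> j)"
    and agree: "\<forall>k<m. k \<noteq> \<sigma> j \<longrightarrow> c ! k = d ! k"
    unfolding fork_def by blast
  have "\<forall>k<m. k \<noteq> j \<longrightarrow> reindex m \<sigma> c ! k = reindex m \<sigma> d ! k"
  proof (intro allI impI)
    fix k assume k: "k < m" "k \<noteq> j"
    then have "\<sigma> k \<noteq> \<sigma> j" using inj j by (simp add: inj_on_eq_iff)
    then show "reindex m \<sigma> c ! k = reindex m \<sigma> d ! k"
      using k maps agree by (simp add: nth_reindex)
  qed
  moreover have "p = (reindex m \<sigma> c ! j, reindex m \<sigma> d ! j)"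
    using cd j by (simp add: nth_reindex)
  ultimately show "p \<in> fork m j R"
    unfolding fork_def using closed[OF cd(1)] closed[OF cd(2)] by blast
qed

lemma xor_less_two_power: "(k::nat) < 2 ^ n \<Longrightarrow> t < 2 ^ n \<Longrightarrow> xor k t < 2 ^ n"
  by (metis take_bit_nat_eq_self_iff take_bit_xor)

lemma bit_digit_xor:
  "bit_digit (xor (k::nat) t) i = (if bit_digit k i = bit_digit t i then 0 else 1)"
  unfolding bit_digit_def by (metis bit_iff_odd bit_xor_iff mod2_eq_if)

lemma bit_digit_pos_iff: "0 < bit_digit k i \<longleftrightarrow> bit_digit k i = 1"
  unfolding bit_digit_def by auto

lemma reindex_xor_cvec:
  assumes "t < 2 ^ n"
  shows "reindex (2 ^ n) (\<lambda>k. xor k t) (cvec n i a b)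
       = (if bit_digit t i = 0 then cvec n i a b else cvec n i b a)"
  by (rule nth_equalityI)
     (auto simp: reindex_def cvec_def xor_less_two_power assms bit_digit_xor bit_digit_pos_iff)

lemma Delta_reindex_xor:
  assumes sym: "\<forall>k<n. sym (\<alpha> k)" and t: "t < 2 ^ n" and c: "c \<in> Delta F n \<alpha>"
  shows "reindex (2 ^ n) (\<lambda>k. xor k t) c \<in> Delta F n \<alpha>"
  using c unfolding Delta_def
proof (rule gen_sub_reindex[rotated 2])
  show "\<forall>k<2 ^ n. xor k t < 2 ^ n" using t by (simp add: xor_less_two_power)
next
  fix x assume "x \<in> {cvec n i a b | i a b. i < n \<and> (a, b) \<in> \<alpha> i}"
  then obtain i a b where x: "x = cvec n i a b" "i < n" "(a, b) \<in> \<alpha> i" by blast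
  then have "(b, a) \<in> \<alpha> i" using sym by (meson symD)
  with x show "reindex (2 ^ n) (\<lambda>k. xor k t) x
      \<in> gen_sub F (2 ^ n) {cvec n i a b | i a b. i < n \<and> (a, b) \<in> \<alpha> i}"
    by (auto simp: reindex_xor_cvec t intro: gen_sub.base)
qed

lemma fork_Delta_subset:
  assumes sym: "\<forall>k<n. sym (\<alpha> k)" and "i < 2 ^ n" and "j < 2 ^ n"
  shows "fork (2 ^ n) i (Delta F n \<alpha>) \<subseteq> fork (2 ^ n) j (Delta F n \<alpha>)"
proof -
  define t where "t = xor i j"
  have t: "t < 2 ^ n" unfolding t_def using assms(2,3) by (rule xor_less_two_power)
  have "inj_on (\<lambda>k. xor k t) {0..<2 ^ n}"
    by (rule inj_onI) (metis xor.assoc xor_self_eq xor.right_neutral)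
  moreover have "xor j t = i" unfolding t_def by (simp add: xor.commute xor.left_commute)
  ultimately show ?thesis
    using fork_subset_fork_reindex[of "\<lambda>k. xor k t" "2 ^ n" "Delta F n \<alpha>" j]
      Delta_reindex_xor[OF sym t] t assms(3) by (simp add: xor_less_two_power)
qed

theorem mainTheorem6:
  fixes A :: "'a set" and F :: "(nat \<times> ('a list \<Rightarrow> 'a)) set"
    and n :: nat and \<alpha> :: "nat \<Rightarrow> 'a rel"
  assumes "malcev_algebra A F"
    and "n \<ge> 1"
    and "\<forall>k<n. congruence A F (\<alpha> k)"
    and "i < 2 ^ n" and "j < 2 ^ n"
  shows "fork (2 ^ n) i (Delta F n \<alpha>) = fork (2 ^ n) j (Delta F n \<alpha>)"
proof -
  have sym: "\<forall>k<n. sym (\<alpha> k)"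
    using assms(3) unfolding congruence_def equiv_def by blast
  show ?thesis
    using fork_Delta_subset[OF sym assms(4,5)] fork_Delta_subset[OF sym assms(5,4)] by blast
qed

end
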